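(* Let $N\ge 2$, $p\ge 1$ and $f\in L^p(\mathbb T^N)$. For a.e. $(t_2,\dots,t_N)\in\mathbb T^{N-1}$ let $f_{t_2,\dots,t_N}(t)=f(t,t_2,\dots,t_N)$, and let $\hat f(t_2,\dots,t_N)=\int_{\mathbb T} f(t,t_2,\dots,t_N)\,d\mu_1(t)$. Then $f\in \mathbf H^p(\mathbb T^N)$ if and only if $f_{t_2,\dots,t_N}\in \mathbf H^p(\mathbb T)$ for a.e. $(t_2,\dots,t_N)\in\mathbb T^{N-1}$ and $\hat f\in \mathbf H^p(\mathbb T^{N-1})$.
   Context: $\mathbb T$ is the unit circle, $\mu_N$ the normalized Lebesgue measure $d\mathbf t/(2\pi)^N$ on $\mathbb T^N$. The half-plane of lattice points $H_N\subset\mathbb Z^N$ is defined recursively by $H_1=\{0,1,2,\dots\}$ and $H_N=\{(k_1,\dots,k_N)\in\mathbb Z^N: k_1>0, \text{ or } k_1=0 \text{ and } (k_2,\dots,k_N)\in H_{N-1}\}$. For $f\in L^1(\mathbb T^N)$ the Fourier coefficients are $C_{\mathbf k}\{f\}=\int_{\mathbb T^N} f(\mathbf t)\mathbf t^{-\mathbf k}\,d\mu_N$, where $\mathbf t^{\mathbf k}=t_1^{k_1}\cdots t_N^{k_N}$. $\mathcal A(\mathbb T^N)$ is the set of $f\in L^1(\mathbb T^N)$ with $C_{\mathbf k}\{f\}=0$ for all $\mathbf k\notin H_N$, and for $p\ge1$, $\mathbf H^p(\mathbb T^N):=\mathcal A(\mathbb T^N)\cap L^p(\mathbb T^N)$ (for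 $N=1$ this is the classical Hardy space of boundary functions). *)

theory Defs
  imports "HOL-Analysis.Analysis"
begin

text \<open>The circle T is parametrised by the angle theta in [0,2pi), t = exp(i theta);
  mu_1 is the normalized Lebesgue measure on [0,2pi).  Points of T^N are
  angle vectors x :: nat => real with coordinates x 0, ..., x (N-1)
  (coordinate j corresponds to t_(j+1) of the paper).\<close>

definition circle_measure :: "real measure" where
  "circle_measure = uniform_measure lborel {0..<2*pi}"

definition torus :: "nat \<Rightarrow> (nat \<Rightarrow> real) measure" where
  "torus N = PiM {..<N} (\<lambda>_. circle_measure)"

definition fourier_coeff :: "nat \<Rightarrow> (nat \<Rightarrow> int) \<Rightarrow> ((nat \<Rightarrow> real) \<Rightarrow> complex) \<Rightarrow> complex" where
  "fourier_coeff N k f = (\<integral>x. f x * exp (- \<i> * of_real (\<Sum>j<N. of_int (k j) * x j)) \<partial>torus N)"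

text \<open>Half-plane H_N of lattice points (only k 0, ..., k (N-1) matter).
  H_0 = everything is an auxiliary base case, making H_1 = {k 0 >= 0}.\<close>
fun in_halfplane :: "nat \<Rightarrow> (nat \<Rightarrow> int) \<Rightarrow> bool" where
  "in_halfplane 0 k = True"
| "in_halfplane (Suc n) k = (k 0 > 0 \<or> (k 0 = 0 \<and> in_halfplane n (\<lambda>i. k (Suc i))))"

definition Lp_space :: "'a measure \<Rightarrow> real \<Rightarrow> ('a \<Rightarrow> complex) \<Rightarrow> bool" where
  "Lp_space M p f \<longleftrightarrow> f \<in> borel_measurable M \<and> integrable M (\<lambda>x. norm (f x) powr p)"

definition analytic_class :: "nat \<Rightarrow> ((nat \<Rightarrow> real) \<Rightarrow> complex) \<Rightarrow> bool" where
  "analytic_class N f \<longleftrightarrow> integrable (torus N) f \<and>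
     (\<forall>k. \<not> in_halfplane N k \<longrightarrow> fourier_coeff N k f = 0)"

definition Hp :: "nat \<Rightarrow> real \<Rightarrow> ((nat \<Rightarrow> real) \<Rightarrow> complex) \<Rightarrow> bool" where
  "Hp N p f \<longleftrightarrow> analytic_class N f \<and> Lp_space (torus N) p f"

definition tcons :: "nat \<Rightarrow> real \<Rightarrow> (nat \<Rightarrow> real) \<Rightarrow> (nat \<Rightarrow> real)" where
  "tcons N t s = (\<lambda>i. if i = 0 then t else if i < N then s (i - 1) else undefined)"

definition slice :: "nat \<Rightarrow> ((nat \<Rightarrow> real) \<Rightarrow> complex) \<Rightarrow> (nat \<Rightarrow> real) \<Rightarrow> ((nat \<Rightarrow> real) \<Rightarrow> complex)" where
  "slice N f s = (\<lambda>x. f (tcons N (x 0) s))"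

definition fhat :: "nat \<Rightarrow> ((nat \<Rightarrow> real) \<Rightarrow> complex) \<Rightarrow> ((nat \<Rightarrow> real) \<Rightarrow> complex)" where
  "fhat N f = (\<lambda>s. \<integral>t. f (tcons N t s) \<partial>circle_measure)"

end

theory Submission
  imports Defs "HOL-Probability.Probability"
begin

(* Fubini splits T^(n+1) into T x T^n, and C_(m,k){f} is the k-th Fourier coefficient on T^n
   of the partial coefficient c_m(s) = int f(t, s) t^(-m) dmu_1(t).  Now (m, k) lies outside
   H_(n+1) iff m < 0, or m = 0 and k lies outside H_n.  Since c_0 = fhat and c_m(s) is the
   m-th coefficient of the slice f_s, uniqueness of Fourier coefficients on T^n shows that f is
   analytic iff almost every slice is analytic and fhat is analytic.  Uniqueness on T^n reduces
   to uniqueness on T by the same splitting; on T it follows from the Stone-Weierstrass theorem.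
   The L^p conditions on the slices and on fhat come from Fubini and Jensen's inequality. *)

section \<open>Uniqueness of Fourier coefficients on the circle\<close>

lemma prob_space_circle_measure: "prob_space circle_measure"
  unfolding circle_measure_def
  by (rule prob_space_uniform_measure) (auto simp: ennreal_mult_eq_top_iff)

lemma sets_circle_measure [measurable_cong, simp]: "sets circle_measure = sets borel"
  unfolding circle_measure_def by simp

lemma borel_measurable_circle_measure_iff [simp]:
  "f \<in> borel_measurable circle_measure \<longleftrightarrow> f \<in> borel_measurable borel"
  by (subst measurable_cong_sets[OF sets_circle_measure refl]) (rule refl)

lemma space_circle_measure [simp]: "space circle_measure = UNIV"
  unfolding circle_measure_def by simp

lemma AE_circle_measure_interior: "AE t in circle_measure. 0 < t \<and> t < 2*pi"
proof -
  have "AE t in circle_measure. t \<in> {0..<2*pi} \<and> t \<noteq> 0"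
    unfolding circle_measure_def
    by (rule AE_uniform_measureI) (auto intro: AE_lborel_singleton[THEN AE_mp])
  then show ?thesis by eventually_elim auto
qed

lemma integrable_mult_bounded:
  fixes h g :: "'a \<Rightarrow> complex"
  assumes h: "integrable M h" and g: "g \<in> borel_measurable M" and B: "\<And>x. norm (g x) \<le> B"
  shows "integrable M (\<lambda>x. h x * g x)"
proof (rule Bochner_Integration.integrable_bound[where f="\<lambda>x. of_real B * h x"])
  show "integrable M (\<lambda>x. of_real B * h x)" using h by simp
  show "(\<lambda>x. h x * g x) \<in> borel_measurable M" using h g by (auto intro: borel_measurable_integrable)
  show "AE x in M. norm (h x * g x) \<le> norm (of_real B * h x)"
  proof (intro AE_I2)
    fix x
    have "norm (h x * g x) \<le> norm (h x) * \<bar>B\<bar>"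
      unfolding norm_mult using B[of x] by (intro mult_left_mono) auto
    then show "norm (h x * g x) \<le> norm (of_real B * h x)" by (simp add: norm_mult mult.commute)
  qed
qed

definition circle_coeff :: "(real \<Rightarrow> complex) \<Rightarrow> int \<Rightarrow> complex" where
  "circle_coeff h m = (\<integral>t. h t * exp (- \<i> * of_real (of_int m * t)) \<partial>circle_measure)"

inductive trig_polynomial :: "(real \<Rightarrow> complex) \<Rightarrow> bool" where
  char: "trig_polynomial (\<lambda>t. iexp (of_int k * t))"
| scale: "trig_polynomial \<phi> \<Longrightarrow> trig_polynomial (\<lambda>t. c * \<phi> t)"
| add: "trig_polynomial \<phi> \<Longrightarrow> trig_polynomial \<psi> \<Longrightarrow> trig_polynomial (\<lambda>t. \<phi> t + \<psi> t)"

lemma trig_polynomial_const: "trig_polynomial (\<lambda>_. c)"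
  using trig_polynomial.scale[OF trig_polynomial.char[of 0], of c] by simp

lemma trig_polynomial_mult_char:
  assumes "trig_polynomial \<phi>"
  shows "trig_polynomial (\<lambda>t. iexp (of_int k * t) * \<phi> t)"
  using assms
proof induction
  case (char l)
  have "iexp (of_int k * t) * iexp (of_int l * t) = iexp (of_int (k + l) * t)" for t
    by (simp add: exp_add[symmetric] algebra_simps)
  then show ?case using trig_polynomial.char[of "k + l"] by simp
next
  case (scale \<phi> c)
  then show ?case using trig_polynomial.scale[OF scale.IH, of c] by (simp add: mult.left_commute)
next
  case (add \<phi> \<psi>)
  then show ?case using trig_polynomial.add[OF add.IH] by (simp add: distrib_left)
qed

lemma trig_polynomial_mult:
  assumes "trig_polynomial \<phi>" and "trig_polynomial \<psi>"
  shows "trig_polynomial (\<lambda>t. \<phi> t * \<psi> t)"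
  using assms(1)
proof induction
  case (char k)
  then show ?case using trig_polynomial_mult_char[OF assms(2)] by simp
next
  case (scale \<phi> c)
  then show ?case using trig_polynomial.scale[OF scale.IH, of c] by (simp add: mult.assoc)
next
  case (add \<phi>1 \<phi>2)
  then show ?case using trig_polynomial.add[OF add.IH] by (simp add: distrib_right)
qed

lemma trig_polynomial_bounded:
  assumes "trig_polynomial \<phi>"
  obtains B where "\<And>t. norm (\<phi> t) \<le> B"
  using assms
proof (induction arbitrary: thesis)
  case (char k)
  then show ?case by (metis norm_exp_i_times order_refl)
next
  case (scale \<phi> c)
  then obtain B where "\<And>t. norm (\<phi> t) \<le> B" by blast
  then have "norm (c * \<phi> t) \<le> norm c * B" for t
    unfolding norm_mult by (intro mult_left_mono) auto
  then show ?case using scale.prems by blast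
next
  case (add \<phi> \<psi>)
  then obtain B C where "\<And>t. norm (\<phi> t) \<le> B" "\<And>t. norm (\<psi> t) \<le> C" by metis
  then have "norm (\<phi> t + \<psi> t) \<le> B + C" for t
    by (meson add_mono norm_triangle_le)
  then show ?case using add.prems by blast
qed

lemma trig_polynomial_continuous: "trig_polynomial \<phi> \<Longrightarrow> continuous_on UNIV \<phi>"
proof (induction rule: trig_polynomial.induct)
  case (char k)
  show ?case by (intro continuous_intros)
qed (simp_all add: continuous_on_add continuous_on_mult_left)

lemma real_polynomial_function_trig_polynomial:
  fixes g :: "complex \<Rightarrow> real"
  assumes "real_polynomial_function g"
  shows "trig_polynomial (\<lambda>t. of_real (g (iexp t)))"
  using assms
proof induction
  case (linear g)
  define a where "a = complex_of_real (g 1)"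
  define b where "b = complex_of_real (g \<i>)"
  have g_eq: "g z = Re z * g 1 + Im z * g \<i>" for z
  proof -
    have "z = Re z *\<^sub>R 1 + Im z *\<^sub>R \<i>" by (simp add: complex_eq_iff)
    then have "g z = g (Re z *\<^sub>R 1 + Im z *\<^sub>R \<i>)" by (rule arg_cong)
    also have "\<dots> = Re z * g 1 + Im z * g \<i>"
      using bounded_linear.linear[OF linear] by (simp add: linear_add linear_scale)
    finally show ?thesis .
  qed
  have "complex_of_real (g (iexp t)) =
      (a - \<i> * b) / 2 * iexp (of_int 1 * t) + (a + \<i> * b) / 2 * iexp (of_int (-1) * t)" for t
  proof -
    have "complex_of_real (g (iexp t)) = of_real (cos t) * a + of_real (sin t) * b"
      unfolding g_eq[of "iexp t"] a_def b_def by (simp add: Re_exp Im_exp)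
    also have "\<dots> = (a - \<i> * b) / 2 * iexp (of_int 1 * t) + (a + \<i> * b) / 2 * iexp (of_int (-1) * t)"
    proof -
      have cos: "complex_of_real (cos t) = (iexp t + exp (- (\<i> * of_real t))) / 2"
        using cos_exp_eq[of "of_real t"] by (simp add: cos_of_real)
      have sin: "complex_of_real (sin t) = \<i> * (exp (- (\<i> * of_real t)) - iexp t) / 2"
        using sin_exp_eq'[of "of_real t"] by (simp add: sin_of_real)
      show ?thesis
        unfolding cos sin by (simp add: diff_divide_distrib add_divide_distrib algebra_simps)
    qed
    finally show ?thesis .
  qed
  then show ?case
    by (simp only: trig_polynomial.add trig_polynomial.scale trig_polynomial.char)
next
  case (const c)
  then show ?case by (simp add: trig_polynomial_const)
next
  case (add f g)
  then show ?case by (simp add: trig_polynomial.add)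
next
  case (mult f g)
  then show ?case by (simp add: trig_polynomial_mult)
qed

lemma integrable_mult_trig_polynomial:
  assumes "integrable circle_measure h" and "trig_polynomial \<phi>"
  shows "integrable circle_measure (\<lambda>t. h t * \<phi> t)"
proof -
  obtain B where "\<And>t. norm (\<phi> t) \<le> B" using trig_polynomial_bounded[OF assms(2)] by blast
  moreover have "\<phi> \<in> borel_measurable borel"
    using trig_polynomial_continuous[OF assms(2)] by (rule borel_measurable_continuous_onI)
  ultimately show ?thesis using assms(1) by (intro integrable_mult_bounded) auto
qed

lemma integral_mult_trig_polynomial_eq_0:
  assumes h: "integrable circle_measure h" and coeff: "\<And>m. circle_coeff h m = 0"
    and "trig_polynomial \<phi>"
  shows "(\<integral>t. h t * \<phi> t \<partial>circle_measure) = 0"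
  using assms(3)
proof induction
  case (char k)
  then show ?case using coeff[of "-k"] by (simp add: circle_coeff_def)
next
  case (scale \<phi> c)
  then show ?case by (simp add: mult.left_commute[of _ c])
next
  case (add \<phi> \<psi>)
  then show ?case
    using integrable_mult_trig_polynomial[OF h] by (simp add: distrib_left)
qed

lemma integral_mult_continuous_eq_0:
  fixes \<psi> :: "complex \<Rightarrow> real"
  assumes h: "integrable circle_measure h" and coeff: "\<And>m. circle_coeff h m = 0"
    and \<psi>: "continuous_on (sphere 0 1) \<psi>"
  shows "(\<integral>t. h t * of_real (\<psi> (iexp t)) \<partial>circle_measure) = 0"
proof -
  have "continuous_on UNIV (\<lambda>t::real. iexp t)" by (intro continuous_intros)
  then have "continuous_on UNIV (\<lambda>t. \<psi> (iexp t))"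
    by (rule continuous_on_compose2[OF \<psi>]) auto
  then have meas: "(\<lambda>t. \<psi> (iexp t)) \<in> borel_measurable borel"
    by (rule borel_measurable_continuous_onI)
  have "bounded (\<psi> ` sphere 0 1)"
    by (rule compact_imp_bounded[OF compact_continuous_image[OF \<psi> compact_sphere]])
  then obtain B where B: "\<forall>z\<in>sphere 0 1. norm (\<psi> z) \<le> B"
    unfolding bounded_iff by blast
  have int_\<psi>: "integrable circle_measure (\<lambda>t. h t * of_real (\<psi> (iexp t)))"
    using meas B by (intro integrable_mult_bounded[OF h]) auto
  define I where "I = (\<integral>t. h t * of_real (\<psi> (iexp t)) \<partial>circle_measure)"
  define C where "C = (\<integral>t. norm (h t) \<partial>circle_measure)"
  have "C \<ge> 0" unfolding C_def by simp
  have approx: "norm I \<le> e * C" if "e > 0" for e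
  proof -
    obtain g where g: "polynomial_function g" "\<And>z. z \<in> sphere 0 1 \<Longrightarrow> norm (\<psi> z - g z) < e"
      using Stone_Weierstrass_polynomial_function[OF compact_sphere \<psi> \<open>e > 0\<close>] by blast
    have trig: "trig_polynomial (\<lambda>t. of_real (g (iexp t)))"
      using g(1) by (intro real_polynomial_function_trig_polynomial) (simp add: real_polynomial_function_eq)
    have "I = (\<integral>t. h t * of_real (\<psi> (iexp t)) - h t * of_real (g (iexp t)) \<partial>circle_measure)"
      using integral_mult_trig_polynomial_eq_0[OF h coeff trig]
        integrable_mult_trig_polynomial[OF h trig] int_\<psi> by (simp add: I_def)
    also have "norm \<dots> \<le> (\<integral>t. e * norm (h t) \<partial>circle_measure)"
    proof (rule Bochner_Integration.integral_norm_bound_integral)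
      show "integrable circle_measure (\<lambda>t. h t * of_real (\<psi> (iexp t)) - h t * of_real (g (iexp t)))"
        using integrable_mult_trig_polynomial[OF h trig] int_\<psi> by simp
      fix t
      have "norm (\<psi> (iexp t) - g (iexp t)) \<le> e" using g(2)[of "iexp t"] by simp
      then show "norm (h t * of_real (\<psi> (iexp t)) - h t * of_real (g (iexp t))) \<le> e * norm (h t)"
        by (simp add: right_diff_distrib[symmetric] norm_mult mult.commute[of e] mult_left_mono
            of_real_diff[symmetric] del: of_real_diff)
    qed (use h in simp)
    also have "\<dots> = e * C" unfolding C_def by simp
    finally show ?thesis .
  qed
  have "norm I \<le> 0 + e" if "e > 0" for e
  proof -
    have "norm I \<le> e / (C + 1) * C" using \<open>C \<ge> 0\<close> \<open>e > 0\<close> by (intro approx) simp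
    also have "\<dots> \<le> e" using \<open>C \<ge> 0\<close> \<open>e > 0\<close> by (simp add: field_simps)
    finally show ?thesis by simp
  qed
  then show ?thesis using field_le_epsilon[of "norm I" 0] by (simp add: I_def)
qed

lemma integral_mult_indicator_open_eq_0:
  assumes h: "integrable circle_measure h" and coeff: "\<And>m. circle_coeff h m = 0"
    and "open V"
  shows "(\<integral>t. h t * of_real (indicator V (iexp t)) \<partial>circle_measure) = 0"
proof (cases "V = UNIV")
  case True
  then show ?thesis using coeff[of 0] by (simp add: circle_coeff_def)
next
  case False
  define A where "A = - V"
  have "closed A" "A \<noteq> {}" unfolding A_def using \<open>open V\<close> False by auto
  define \<psi> :: "nat \<Rightarrow> complex \<Rightarrow> real" where "\<psi> m z = min 1 (real m * infdist z A)" for m z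
  have cont: "continuous_on UNIV (\<psi> m)" for m
    unfolding \<psi>_def by (intro continuous_intros)
  have [measurable]: "\<psi> m \<in> borel_measurable borel" for m
    using cont by (rule borel_measurable_continuous_onI)
  have [measurable]: "V \<in> sets borel" using \<open>open V\<close> by simp
  have lim: "(\<lambda>m. \<psi> m z) \<longlonglongrightarrow> indicator V z" for z
  proof (cases "z \<in> V")
    case True
    then have "infdist z A > 0"
      using infdist_pos_not_in_closed[OF \<open>closed A\<close> \<open>A \<noteq> {}\<close>] by (simp add: A_def)
    then have "filterlim (\<lambda>m. infdist z A * real m) at_top sequentially"
      by (rule filterlim_tendsto_pos_mult_at_top[OF tendsto_const _ filterlim_real_sequentially])
    then have "eventually (\<lambda>m. 1 < infdist z A * real m) sequentially"
      by (simp add: filterlim_at_top_dense)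
    then have "eventually (\<lambda>m. \<psi> m z = 1) sequentially"
      by eventually_elim (simp add: \<psi>_def mult.commute)
    then show ?thesis using True by (simp add: tendsto_eventually)
  next
    case False
    then show ?thesis by (simp add: \<psi>_def A_def)
  qed
  have "(\<lambda>m. \<integral>t. h t * of_real (\<psi> m (iexp t)) \<partial>circle_measure) \<longlonglongrightarrow>
      (\<integral>t. h t * of_real (indicator V (iexp t)) \<partial>circle_measure)"
  proof (rule integral_dominated_convergence[where w="\<lambda>t. norm (h t)"])
    show "AE t in circle_measure. (\<lambda>m. h t * of_real (\<psi> m (iexp t))) \<longlonglongrightarrow>
        h t * of_real (indicator V (iexp t))"
      by (intro AE_I2 tendsto_mult tendsto_const tendsto_of_real lim)
    show "AE t in circle_measure. norm (h t * of_real (\<psi> m (iexp t))) \<le> norm (h t)" for m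
      by (intro AE_I2) (simp add: \<psi>_def norm_mult mult_left_le infdist_nonneg)
  qed (use h in \<open>simp_all\<close>)
  moreover have "(\<integral>t. h t * of_real (\<psi> m (iexp t)) \<partial>circle_measure) = 0" for m
    using integral_mult_continuous_eq_0[OF h coeff continuous_on_subset[OF cont]] by simp
  ultimately show ?thesis by (simp add: LIMSEQ_const_iff)
qed

text \<open>For \<open>0 < t < 2\<pi>\<close> the angle of \<open>iexp t\<close> is \<open>t\<close>, so up to a null set an interval of
  angles is the preimage of an open arc.\<close>
lemma integral_mult_indicator_interval_eq_0:
  assumes h: "integrable circle_measure h" and coeff: "\<And>m. circle_coeff h m = 0"
  shows "(\<integral>t. h t * of_real (indicator {a<..<b} t) \<partial>circle_measure) = 0"
proof -
  define V where "V = - \<real>\<^sub>\<ge>\<^sub>0 \<inter> Arg2pi -` {a<..<b}"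
  have "continuous_on (- \<real>\<^sub>\<ge>\<^sub>0) Arg2pi"
    by (intro continuous_at_imp_continuous_on ballI continuous_at_Arg2pi) auto
  then have "open V"
    unfolding V_def by (rule continuous_open_preimage) auto
  then have [measurable]: "V \<in> sets borel" by simp
  have "AE t in circle_measure. indicator {a<..<b} t = (indicator V (iexp t) :: real)"
    using AE_circle_measure_interior
  proof eventually_elim
    case (elim t)
    then have arg: "Arg2pi (iexp t) = t" by (subst Arg2pi_exp) auto
    moreover have "iexp t \<notin> \<real>\<^sub>\<ge>\<^sub>0"
      using arg elim Arg2pi_eq_0[of "iexp t"] by (auto simp: complex_nonneg_Reals_iff complex_is_Real_iff)
    ultimately show ?case by (simp add: V_def indicator_def)
  qed
  then have "(\<integral>t. h t * of_real (indicator {a<..<b} t) \<partial>circle_measure) =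
      (\<integral>t. h t * of_real (indicator V (iexp t)) \<partial>circle_measure)"
    by (intro integral_cong_AE) (use h in auto)
  also have "\<dots> = 0" by (rule integral_mult_indicator_open_eq_0[OF h coeff \<open>open V\<close>])
  finally show ?thesis .
qed

lemma AE_zero_if_set_integrals_zero_on_generator:
  fixes h :: "'a \<Rightarrow> 'b::{banach, second_countable_topology}"
  assumes "sigma_finite_measure M" and h: "integrable M h"
    and sets_M: "sets M = sigma_sets (space M) G" and "Int_stable G" and "G \<subseteq> Pow (space M)"
    and gen: "\<And>A. A \<in> G \<Longrightarrow> set_lebesgue_integral M A h = 0"
    and total: "integral\<^sup>L M h = 0"
  shows "AE x in M. h x = 0"
proof (rule sigma_finite_measure.density_zero[OF assms(1) h])
  have set_int: "set_integrable M A h" if "A \<in> sets M" for A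
    unfolding set_integrable_def using that h by (rule integrable_mult_indicator)
  fix A assume "A \<in> sets M"
  then have "A \<in> sigma_sets (space M) G" using sets_M by simp
  from \<open>Int_stable G\<close> \<open>G \<subseteq> Pow (space M)\<close> this show "set_lebesgue_integral M A h = 0"
  proof (induction rule: sigma_sets_induct_disjoint)
    case (basic A)
    then show ?case by (rule gen)
  next
    case empty
    then show ?case by (simp add: set_lebesgue_integral_def)
  next
    case (compl A)
    then have "A \<in> sets M" using sets_M by simp
    have "set_lebesgue_integral M (space M) h = set_lebesgue_integral M ((space M - A) \<union> A) h"
      using sets.sets_into_space[OF \<open>A \<in> sets M\<close>] by (simp add: Un_absorb2)
    also have "\<dots> = set_lebesgue_integral M (space M - A) h + set_lebesgue_integral M A h"
      using \<open>A \<in> sets M\<close> by (intro set_integral_Un set_int) auto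
    finally have "set_lebesgue_integral M (space M) h =
        set_lebesgue_integral M (space M - A) h + set_lebesgue_integral M A h" .
    then show ?case using compl.IH total set_integral_space[OF h] by simp
  next
    case (union A)
    then have "A i \<in> sets M" for i using sets_M by auto
    then have "set_lebesgue_integral M (\<Union>i. A i) h = (\<Sum>i. set_lebesgue_integral M (A i) h)"
      using union.hyps(1) set_int
      by (intro lebesgue_integral_countable_add) (auto simp: disjoint_family_on_def)
    then show ?case using union.IH by simp
  qed
qed

theorem AE_zero_if_circle_coeff_zero:
  assumes h: "integrable circle_measure h" and coeff: "\<And>m. circle_coeff h m = 0"
  shows "AE t in circle_measure. h t = 0"
proof (rule AE_zero_if_set_integrals_zero_on_generator[OF _ h])
  show "sigma_finite_measure circle_measure"
    using prob_space_circle_measure by (simp add: prob_space_imp_sigma_finite)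
  let ?G = "range (\<lambda>(a, b). {a<..<b::real})"
  show "sets circle_measure = sigma_sets (space circle_measure) ?G"
    by (simp add: borel_eq_box)
  show "Int_stable ?G"
    by (auto simp: Int_stable_def intro!: image_eqI[where x="(max _ _, min _ _)"])
  show "set_lebesgue_integral circle_measure A h = 0" if "A \<in> ?G" for A
    using that integral_mult_indicator_interval_eq_0[OF h coeff]
    by (auto simp: set_lebesgue_integral_def scaleR_conv_of_real mult.commute)
  show "integral\<^sup>L circle_measure h = 0"
    using coeff[of 0] by (simp add: circle_coeff_def)
qed simp

section \<open>The torus as a product\<close>

lemma prob_space_torus: "prob_space (torus n)"
  unfolding torus_def by (intro prob_space_PiM prob_space_circle_measure)

lemma space_torus: "space (torus n) = PiE {..<n} (\<lambda>_. UNIV)"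
  unfolding torus_def by (simp add: space_PiM)

lemma pair_sigma_finite_torus_circle: "pair_sigma_finite (torus n) circle_measure"
proof -
  interpret T: prob_space "torus n" by (rule prob_space_torus)
  interpret C: prob_space circle_measure by (rule prob_space_circle_measure)
  show ?thesis by unfold_locales
qed

lemma product_sigma_finite_circle: "product_sigma_finite (\<lambda>_. circle_measure)"
proof -
  interpret prob_space circle_measure by (rule prob_space_circle_measure)
  show ?thesis by unfold_locales
qed

lemma measurable_tcons:
  "(\<lambda>(s, t). tcons (Suc n) t s) \<in> measurable (torus n \<Otimes>\<^sub>M circle_measure) (torus (Suc n))"
proof -
  have "(\<lambda>(s, t). tcons (Suc n) t s) =
      (\<lambda>\<omega>. \<lambda>i\<in>{..<Suc n}. if i = 0 then snd \<omega> else fst \<omega> (i - 1))"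
    by (auto simp: tcons_def fun_eq_iff)
  also have "\<dots> \<in> measurable (torus n \<Otimes>\<^sub>M circle_measure) (torus (Suc n))"
    unfolding torus_def
  proof (rule measurable_restrict)
    fix i assume "i \<in> {..<Suc n}"
    then have "i \<noteq> 0 \<Longrightarrow> (\<lambda>s. s (i - 1)) \<in> measurable (PiM {..<n} (\<lambda>_. circle_measure)) circle_measure"
      by (intro measurable_component_singleton) auto
    then show "(\<lambda>\<omega>. if i = 0 then snd \<omega> else fst \<omega> (i - 1)) \<in>
        measurable (PiM {..<n} (\<lambda>_. circle_measure) \<Otimes>\<^sub>M circle_measure) circle_measure"
      by (cases "i = 0") simp_all
  qed
  finally show ?thesis .
qed

lemma distr_tcons_torus:
  "distr (torus n \<Otimes>\<^sub>M circle_measure) (torus (Suc n)) (\<lambda>(s, t). tcons (Suc n) t s) = torus (Suc n)"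
  unfolding torus_def[of "Suc n"]
proof (rule product_sigma_finite.PiM_eqI[OF product_sigma_finite_circle])
  interpret C: prob_space circle_measure by (rule prob_space_circle_measure)
  fix A assume A: "\<And>i. i \<in> {..<Suc n} \<Longrightarrow> A i \<in> sets circle_measure"
  have "tcons (Suc n) t s \<in> PiE {..<Suc n} A \<longleftrightarrow> t \<in> A 0 \<and> (\<forall>i<n. s i \<in> A (Suc i))" for s t
    by (auto simp: PiE_iff tcons_def extensional_def lessThan_Suc_eq_insert_0 gr0_conv_Suc)
  then have "(\<lambda>(s, t). tcons (Suc n) t s) -` PiE {..<Suc n} A \<inter> space (torus n \<Otimes>\<^sub>M circle_measure) =
      PiE {..<n} (\<lambda>i. A (Suc i)) \<times> A 0"
    by (auto simp: space_pair_measure space_torus PiE_iff)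
  then have "emeasure (distr (torus n \<Otimes>\<^sub>M circle_measure) (torus (Suc n)) (\<lambda>(s, t). tcons (Suc n) t s))
      (PiE {..<Suc n} A) = emeasure (torus n \<Otimes>\<^sub>M circle_measure) (PiE {..<n} (\<lambda>i. A (Suc i)) \<times> A 0)"
    using A by (subst emeasure_distr[OF measurable_tcons]) (auto simp: torus_def intro!: sets_PiM_I_finite)
  also have "\<dots> = emeasure (torus n) (PiE {..<n} (\<lambda>i. A (Suc i))) * emeasure circle_measure (A 0)"
    using A by (intro C.emeasure_pair_measure_Times) (auto simp: torus_def intro!: sets_PiM_I_finite)
  also have "\<dots> = (\<Prod>i<n. emeasure circle_measure (A (Suc i))) * emeasure circle_measure (A 0)"
    unfolding torus_def using A by (subst product_sigma_finite.emeasure_PiM[OF product_sigma_finite_circle]) auto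
  also have "\<dots> = (\<Prod>i<Suc n. emeasure circle_measure (A i))"
    by (simp only: prod.lessThan_Suc_shift mult.commute)
  finally show "emeasure (distr (torus n \<Otimes>\<^sub>M circle_measure) (PiM {..<Suc n} (\<lambda>_. circle_measure))
      (\<lambda>(s, t). tcons (Suc n) t s)) (PiE {..<Suc n} A) = (\<Prod>i<Suc n. emeasure circle_measure (A i))"
    by (simp add: torus_def)
qed simp_all

context
  fixes F :: "(nat \<Rightarrow> real) \<Rightarrow> 'b::{banach, second_countable_topology}"
begin

lemma integrable_torus_Suc_imp_product:
  assumes "integrable (torus (Suc n)) F"
  shows "integrable (torus n \<Otimes>\<^sub>M circle_measure) (\<lambda>(s, t). F (tcons (Suc n) t s))"
  using integrable_distr_eq[OF measurable_tcons borel_measurable_integrable[OF assms]] assms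
  unfolding distr_tcons_torus by (simp add: case_prod_beta')

lemma integral_torus_Suc:
  assumes "integrable (torus (Suc n)) F"
  shows "integral\<^sup>L (torus (Suc n)) F = (\<integral>s. (\<integral>t. F (tcons (Suc n) t s) \<partial>circle_measure) \<partial>torus n)"
proof -
  interpret pair_sigma_finite "torus n" circle_measure by (rule pair_sigma_finite_torus_circle)
  have "integral\<^sup>L (torus (Suc n)) F = (\<integral>(s, t). F (tcons (Suc n) t s) \<partial>(torus n \<Otimes>\<^sub>M circle_measure))"
    using integral_distr[OF measurable_tcons borel_measurable_integrable[OF assms]]
    unfolding distr_tcons_torus by (simp add: case_prod_beta')
  also have "\<dots> = (\<integral>s. (\<integral>t. F (tcons (Suc n) t s) \<partial>circle_measure) \<partial>torus n)"
    using integral_fst'[OF integrable_torus_Suc_imp_product[OF assms]] by simp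
  finally show ?thesis .
qed

lemma AE_integrable_fiber:
  assumes "integrable (torus (Suc n)) F"
  shows "AE s in torus n. integrable circle_measure (\<lambda>t. F (tcons (Suc n) t s))"
proof -
  interpret pair_sigma_finite "torus n" circle_measure by (rule pair_sigma_finite_torus_circle)
  show ?thesis using AE_integrable_fst'[OF integrable_torus_Suc_imp_product[OF assms]] by simp
qed

lemma integrable_fiber_integral:
  assumes "integrable (torus (Suc n)) F"
  shows "integrable (torus n) (\<lambda>s. \<integral>t. F (tcons (Suc n) t s) \<partial>circle_measure)"
proof -
  interpret pair_sigma_finite "torus n" circle_measure by (rule pair_sigma_finite_torus_circle)
  show ?thesis using integrable_fst'[OF integrable_torus_Suc_imp_product[OF assms]] by simp
qed

end

lemma measurable_fiber:
  assumes "F \<in> measurable (torus (Suc n)) M" and "s \<in> space (torus n)"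
  shows "(\<lambda>t. F (tcons (Suc n) t s)) \<in> measurable circle_measure M"
  using measurable_Pair2[OF measurable_comp[OF measurable_tcons assms(1)] assms(2)] by (simp add: o_def)

lemma AE_torus_SucI:
  assumes P: "{x \<in> space (torus (Suc n)). P x} \<in> sets (torus (Suc n))"
    and AE: "AE s in torus n. AE t in circle_measure. P (tcons (Suc n) t s)"
  shows "AE x in torus (Suc n). P x"
proof -
  interpret pair_sigma_finite "torus n" circle_measure by (rule pair_sigma_finite_torus_circle)
  have "{x \<in> space (torus n \<Otimes>\<^sub>M circle_measure). P ((\<lambda>(s, t). tcons (Suc n) t s) x)} =
      (\<lambda>(s, t). tcons (Suc n) t s) -` {x \<in> space (torus (Suc n)). P x} \<inter> space (torus n \<Otimes>\<^sub>M circle_measure)"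
    using measurable_space[OF measurable_tcons[of n]] by auto
  also have "\<dots> \<in> sets (torus n \<Otimes>\<^sub>M circle_measure)"
    by (rule measurable_sets[OF measurable_tcons P])
  finally have "AE x in torus n \<Otimes>\<^sub>M circle_measure. P ((\<lambda>(s, t). tcons (Suc n) t s) x)"
    using AE by (intro AE_pair_measure) auto
  then show ?thesis
    by (subst distr_tcons_torus[symmetric]) (simp add: AE_distr_iff[OF measurable_tcons P])
qed

section \<open>Fourier coefficients in the first variable\<close>

lemma tcons_0 [simp]: "tcons N t s 0 = t"
  by (simp add: tcons_def)

lemma borel_measurable_torus_component: "j < N \<Longrightarrow> (\<lambda>x. x j) \<in> borel_measurable (torus N)"
  using measurable_component_singleton[of j "{..<N}" "\<lambda>_. circle_measure"]
    measurable_cong_sets[OF refl sets_circle_measure]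
  unfolding torus_def by auto

lemma borel_measurable_fourier_kernel:
  "(\<lambda>x. exp (- \<i> * of_real (\<Sum>j<N. of_int (k j) * x j))) \<in> borel_measurable (torus N)"
proof -
  have "(\<lambda>x. \<Sum>j<N. of_int (k j) * x j) \<in> borel_measurable (torus N)"
    by (intro borel_measurable_sum borel_measurable_times borel_measurable_const
        borel_measurable_torus_component) simp
  then show ?thesis by measurable
qed

lemma integrable_mult_fourier_kernel:
  "integrable (torus N) f \<Longrightarrow>
    integrable (torus N) (\<lambda>x. f x * exp (- \<i> * of_real (\<Sum>j<N. of_int (k j) * x j)))"
  by (rule integrable_mult_bounded[OF _ borel_measurable_fourier_kernel, where B=1])
    (simp_all add: norm_mult norm_exp)

definition partial_coeff :: "nat \<Rightarrow> ((nat \<Rightarrow> real) \<Rightarrow> complex) \<Rightarrow> int \<Rightarrow> (nat \<Rightarrow> real) \<Rightarrow> complex" where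
  "partial_coeff N f m s = circle_coeff (\<lambda>t. f (tcons N t s)) m"

lemma fhat_eq_partial_coeff: "fhat N f = partial_coeff N f 0"
  by (simp add: fun_eq_iff fhat_def partial_coeff_def circle_coeff_def)

lemma integrable_partial_coeff:
  assumes "integrable (torus (Suc n)) f"
  shows "integrable (torus n) (partial_coeff (Suc n) f m)"
proof -
  have [measurable]: "(\<lambda>x. x 0) \<in> borel_measurable (torus (Suc n))"
    by (rule borel_measurable_torus_component) simp
  have "integrable (torus (Suc n)) (\<lambda>x. f x * exp (- \<i> * of_real (of_int m * x 0)))"
    by (rule integrable_mult_bounded[OF assms, where B=1]) (simp_all add: norm_mult)
  from integrable_fiber_integral[OF this] show ?thesis
    by (simp add: partial_coeff_def[abs_def] circle_coeff_def)
qed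

lemma fourier_coeff_Suc:
  assumes "integrable (torus (Suc n)) f"
  shows "fourier_coeff (Suc n) k f = fourier_coeff n (\<lambda>j. k (Suc j)) (partial_coeff (Suc n) f (k 0))"
proof -
  have "(\<Sum>j<Suc n. of_int (k j) * tcons (Suc n) t s j) =
      of_int (k 0) * t + (\<Sum>j<n. of_int (k (Suc j)) * s j)" for t s
    by (simp only: sum.lessThan_Suc_shift) (simp add: tcons_def)
  then have kernel: "exp (- \<i> * of_real (\<Sum>j<Suc n. of_int (k j) * tcons (Suc n) t s j)) =
      exp (- \<i> * of_real (of_int (k 0) * t)) * exp (- \<i> * of_real (\<Sum>j<n. of_int (k (Suc j)) * s j))"
    for t s by (simp add: exp_add[symmetric] distrib_left)
  have "fourier_coeff (Suc n) k f = (\<integral>s. (\<integral>t. f (tcons (Suc n) t s) *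
      exp (- \<i> * of_real (\<Sum>j<Suc n. of_int (k j) * tcons (Suc n) t s j)) \<partial>circle_measure) \<partial>torus n)"
    unfolding fourier_coeff_def by (rule integral_torus_Suc[OF integrable_mult_fourier_kernel[OF assms]])
  also have "\<dots> = (\<integral>s. (\<integral>t. f (tcons (Suc n) t s) * exp (- \<i> * of_real (of_int (k 0) * t)) *
      exp (- \<i> * of_real (\<Sum>j<n. of_int (k (Suc j)) * s j)) \<partial>circle_measure) \<partial>torus n)"
    by (simp only: kernel mult.assoc)
  also have "\<dots> = fourier_coeff n (\<lambda>j. k (Suc j)) (partial_coeff (Suc n) f (k 0))"
    unfolding fourier_coeff_def partial_coeff_def circle_coeff_def integral_mult_left_zero ..
  finally show ?thesis .
qed

lemma fourier_coeff_partial_coeff: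
  assumes "integrable (torus (Suc n)) f"
  shows "fourier_coeff n k (partial_coeff (Suc n) f m) = fourier_coeff (Suc n) (case_nat m k) f"
  using fourier_coeff_Suc[OF assms, of "case_nat m k"] by simp

lemma fourier_coeff_eq_0_if_AE_zero:
  "AE x in torus n. g x = 0 \<Longrightarrow> fourier_coeff n k g = 0"
  unfolding fourier_coeff_def by (rule integral_eq_zero_AE) auto

theorem AE_zero_if_fourier_coeff_zero:
  assumes "integrable (torus n) g" and "\<And>k. fourier_coeff n k g = 0"
  shows "AE x in torus n. g x = 0"
  using assms
proof (induction n arbitrary: g)
  case 0
  have torus_0: "torus 0 = count_space {\<lambda>_. undefined}"
    unfolding torus_def by (simp add: PiM_empty)
  have "fourier_coeff 0 k g = g (\<lambda>_. undefined)" for k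
    unfolding fourier_coeff_def torus_0 by (simp add: lebesgue_integral_count_space_finite)
  then show ?case using "0.prems"(2) unfolding torus_0 AE_count_space by simp
next
  case (Suc n)
  have [measurable]: "g \<in> borel_measurable (torus (Suc n))" using Suc.prems(1) by simp
  have "AE s in torus n. partial_coeff (Suc n) g m s = 0" for m
    using Suc.prems by (intro Suc.IH integrable_partial_coeff) (simp_all add: fourier_coeff_partial_coeff)
  then have "AE s in torus n. \<forall>m. partial_coeff (Suc n) g m s = 0" by (simp add: AE_all_countable)
  then have "AE s in torus n. AE t in circle_measure. g (tcons (Suc n) t s) = 0"
    using AE_integrable_fiber[OF Suc.prems(1)]
    by eventually_elim (auto intro: AE_zero_if_circle_coeff_zero simp: partial_coeff_def)
  then show ?case by (intro AE_torus_SucI) measurable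
qed

section \<open>Slices and analyticity\<close>

lemma measurable_torus_1_component: "(\<lambda>x. x 0) \<in> measurable (torus 1) circle_measure"
  unfolding torus_def by (rule measurable_component_singleton) simp

lemma distr_torus_1_component: "distr (torus 1) circle_measure (\<lambda>x. x 0) = circle_measure"
  unfolding torus_def by (rule distr_PiM_component) (auto intro: prob_space_circle_measure)

context
  fixes H :: "real \<Rightarrow> 'b::{banach, second_countable_topology}"
  assumes H: "H \<in> borel_measurable circle_measure"
begin

lemma integrable_torus_1_iff: "integrable (torus 1) (\<lambda>x. H (x 0)) \<longleftrightarrow> integrable circle_measure H"
  using integrable_distr_eq[OF measurable_torus_1_component H]
  unfolding distr_torus_1_component by (rule sym)

lemma integral_torus_1: "(\<integral>x. H (x 0) \<partial>torus 1) = integral\<^sup>L circle_measure H"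
  using integral_distr[OF measurable_torus_1_component H]
  unfolding distr_torus_1_component by (rule sym)

end

context
  fixes n :: nat and f :: "(nat \<Rightarrow> real) \<Rightarrow> complex" and s :: "nat \<Rightarrow> real"
  assumes f [measurable]: "f \<in> borel_measurable (torus (Suc n))" and s: "s \<in> space (torus n)"
begin

lemma borel_measurable_fiber [measurable]: "(\<lambda>t. f (tcons (Suc n) t s)) \<in> borel_measurable borel"
  using measurable_fiber[OF f s] by simp

lemma borel_measurable_slice: "slice (Suc n) f s \<in> borel_measurable (torus 1)"
  using measurable_comp[OF measurable_torus_1_component measurable_fiber[OF f s]]
  by (simp add: slice_def o_def)

lemma fourier_coeff_slice: "fourier_coeff 1 k (slice (Suc n) f s) = partial_coeff (Suc n) f (k 0) s"
  using integral_torus_1[of "\<lambda>t. f (tcons (Suc n) t s) * exp (- \<i> * of_real (of_int (k 0) * t))"]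
  by (simp add: fourier_coeff_def slice_def partial_coeff_def circle_coeff_def)

lemma analytic_class_slice_iff:
  assumes "integrable circle_measure (\<lambda>t. f (tcons (Suc n) t s))"
  shows "analytic_class 1 (slice (Suc n) f s) \<longleftrightarrow> (\<forall>m<0. partial_coeff (Suc n) f m s = 0)"
proof -
  have "integrable (torus 1) (slice (Suc n) f s)"
    using assms integrable_torus_1_iff[of "\<lambda>t. f (tcons (Suc n) t s)"] by (simp add: slice_def)
  moreover have "\<not> in_halfplane 1 k \<longleftrightarrow> k 0 < 0" for k
    by (auto simp: numeral_eq_Suc)
  moreover have "(\<forall>k::nat \<Rightarrow> int. k 0 < 0 \<longrightarrow> P (k 0)) \<longleftrightarrow> (\<forall>m<0. P m)" for P
  proof
    show "\<forall>m<0. P m" if "\<forall>k::nat \<Rightarrow> int. k 0 < 0 \<longrightarrow> P (k 0)"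
      using that[rule_format, of "\<lambda>_. _"] by simp
  qed simp
  ultimately show ?thesis
    unfolding analytic_class_def fourier_coeff_slice by simp
qed

end

lemma case_nat_head_tail: "case_nat (k 0) (\<lambda>j. k (Suc j)) = k"
  by (auto simp: fun_eq_iff split: nat.split)

lemma analytic_class_Suc_iff_partial_coeff:
  assumes f: "integrable (torus (Suc n)) f"
  shows "analytic_class (Suc n) f \<longleftrightarrow>
    (AE s in torus n. \<forall>m<0. partial_coeff (Suc n) f m s = 0) \<and> analytic_class n (partial_coeff (Suc n) f 0)"
proof -
  let ?c = "partial_coeff (Suc n) f"
  have all_case_nat: "(\<forall>k::nat \<Rightarrow> int. P k) \<longleftrightarrow> (\<forall>m k. P (case_nat m k))" for P
    by (metis case_nat_head_tail)
  have zero_iff: "(\<forall>k. fourier_coeff n k (?c m) = 0) \<longleftrightarrow> (AE s in torus n. ?c m s = 0)" for m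
    using AE_zero_if_fourier_coeff_zero[OF integrable_partial_coeff[OF f]] fourier_coeff_eq_0_if_AE_zero
    by blast
  have AE_neg: "(\<forall>m<0. AE s in torus n. ?c m s = 0) \<longleftrightarrow> (AE s in torus n. \<forall>m<0. ?c m s = 0)"
  proof
    assume "\<forall>m<0. AE s in torus n. ?c m s = 0"
    then have "AE s in torus n. m < 0 \<longrightarrow> ?c m s = 0" for m
      by (cases "m < 0") auto
    then show "AE s in torus n. \<forall>m<0. ?c m s = 0" by (simp add: AE_all_countable)
  qed auto
  have "analytic_class (Suc n) f \<longleftrightarrow>
      (\<forall>m k. \<not> (0 < m \<or> m = 0 \<and> in_halfplane n k) \<longrightarrow> fourier_coeff n k (?c m) = 0)"
    unfolding analytic_class_def all_case_nat[of "\<lambda>k. \<not> in_halfplane (Suc n) k \<longrightarrow> _ k"]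
    using f by (simp add: fourier_coeff_partial_coeff[OF f, symmetric])
  also have "\<dots> \<longleftrightarrow> (\<forall>m<0. \<forall>k. fourier_coeff n k (?c m) = 0) \<and>
      (\<forall>k. \<not> in_halfplane n k \<longrightarrow> fourier_coeff n k (?c 0) = 0)"
    by (auto simp: not_less le_less)
  also have "\<dots> \<longleftrightarrow> (AE s in torus n. \<forall>m<0. ?c m s = 0) \<and> analytic_class n (?c 0)"
    using integrable_partial_coeff[OF f] by (simp add: zero_iff AE_neg analytic_class_def)
  finally show ?thesis .
qed

theorem analytic_class_Suc_iff:
  assumes f: "integrable (torus (Suc n)) f"
  shows "analytic_class (Suc n) f \<longleftrightarrow>
    (AE s in torus n. analytic_class 1 (slice (Suc n) f s)) \<and> analytic_class n (fhat (Suc n) f)"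
proof -
  have "AE s in torus n. analytic_class 1 (slice (Suc n) f s) \<longleftrightarrow> (\<forall>m<0. partial_coeff (Suc n) f m s = 0)"
    using AE_integrable_fiber[OF f] AE_space
  proof eventually_elim
    case (elim s)
    show ?case by (rule analytic_class_slice_iff[OF borel_measurable_integrable[OF f] elim(2,1)])
  qed
  then have "(AE s in torus n. analytic_class 1 (slice (Suc n) f s)) \<longleftrightarrow>
      (AE s in torus n. \<forall>m<0. partial_coeff (Suc n) f m s = 0)"
    by (rule eventually_subst)
  then show ?thesis
    unfolding analytic_class_Suc_iff_partial_coeff[OF f] fhat_eq_partial_coeff by simp
qed

section \<open>The \<open>L\<^sup>p\<close> conditions\<close>

lemma Lp_space_imp_integrable:
  assumes "finite_measure M" and "p \<ge> 1" and "Lp_space M p f"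
  shows "integrable M f"
proof (rule Bochner_Integration.integrable_bound[where f="\<lambda>x. 1 + norm (f x) powr p"])
  interpret finite_measure M by fact
  show "integrable M (\<lambda>x. 1 + norm (f x) powr p)" and "f \<in> borel_measurable M"
    using assms(3) by (simp_all add: Lp_space_def)
  have "norm (f x) \<le> 1 + norm (f x) powr p" for x
  proof (cases "norm (f x) \<le> 1")
    case False
    then have "norm (f x) powr 1 \<le> norm (f x) powr p" using \<open>p \<ge> 1\<close> by (intro powr_mono) auto
    then show ?thesis using False by simp
  qed (simp add: add_increasing2)
  then show "AE x in M. norm (f x) \<le> norm (1 + norm (f x) powr p)" by simp
qed

lemma powr_above_tangent:
  fixes a y p :: real
  assumes "a > 0" and "y \<ge> 0" and "p \<ge> 1"
  shows "a powr p + p * a powr (p - 1) * (y - a) \<le> y powr p"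
proof (cases "y = 0")
  case True
  have "a powr (p - 1) * a = a powr p" using \<open>a > 0\<close> by (simp add: powr_diff)
  then have "a powr p + p * a powr (p - 1) * (y - a) = (1 - p) * a powr p"
    using True by (simp add: algebra_simps)
  also have "\<dots> \<le> 0" using \<open>p \<ge> 1\<close> by (simp add: mult_nonpos_nonneg)
  finally show ?thesis using True by simp
next
  case False
  have "p * a powr (p - 1) * (y - a) \<le> y powr p - a powr p"
  proof (rule convex_on_imp_above_tangent[OF powr_convex[OF \<open>p \<ge> 1\<close>]])
    show "((\<lambda>x. x powr p) has_real_derivative p * a powr (p - 1)) (at a within {0<..})"
      using has_real_derivative_powr[OF \<open>a > 0\<close>] by (rule has_field_derivative_at_within)
  qed (use \<open>a > 0\<close> \<open>y \<ge> 0\<close> False in \<open>auto simp: interior_open\<close>)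
  then show ?thesis by simp
qed

lemma (in prob_space) norm_integral_powr_le:
  fixes u :: "'a \<Rightarrow> 'b::{banach, second_countable_topology}"
  assumes u: "integrable M u" and "integrable M (\<lambda>x. norm (u x) powr p)" and "p \<ge> 1"
  shows "norm (integral\<^sup>L M u) powr p \<le> (\<integral>x. norm (u x) powr p \<partial>M)"
proof -
  define a where "a = (\<integral>x. norm (u x) \<partial>M)"
  have "norm (integral\<^sup>L M u) \<le> a" unfolding a_def by (rule integral_norm_bound)
  show ?thesis
  proof (cases "a = 0")
    case True
    then show ?thesis using \<open>norm (integral\<^sup>L M u) \<le> a\<close> \<open>p \<ge> 1\<close> by simp
  next
    case False
    then have "a > 0" unfolding a_def by (simp add: order.not_eq_order_implies_strict)
    have "norm (integral\<^sup>L M u) powr p \<le> a powr p"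
      using \<open>norm (integral\<^sup>L M u) \<le> a\<close> \<open>p \<ge> 1\<close> by (intro powr_mono2) auto
    also have "\<dots> = (\<integral>x. a powr p + p * a powr (p - 1) * (norm (u x) - a) \<partial>M)"
      using u by (simp add: prob_space a_def)
    also have "\<dots> \<le> (\<integral>x. norm (u x) powr p \<partial>M)"
      using assms \<open>a > 0\<close> by (intro integral_mono powr_above_tangent) auto
    finally show ?thesis .
  qed
qed

lemma AE_Lp_space_slice:
  assumes "Lp_space (torus (Suc n)) p f"
  shows "AE s in torus n. Lp_space (torus 1) p (slice (Suc n) f s)"
proof -
  have [measurable]: "f \<in> borel_measurable (torus (Suc n))"
    and "integrable (torus (Suc n)) (\<lambda>x. norm (f x) powr p)"
    using assms by (simp_all add: Lp_space_def)
  from AE_integrable_fiber[OF this(2)] AE_space show ?thesis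
  proof eventually_elim
    case (elim s)
    have [measurable]: "(\<lambda>t. f (tcons (Suc n) t s)) \<in> borel_measurable borel"
      by (rule borel_measurable_fiber) (use elim in auto)
    have "(\<lambda>t. norm (f (tcons (Suc n) t s)) powr p) \<in> borel_measurable borel" by measurable
    then have "integrable (torus 1) (\<lambda>x. norm (slice (Suc n) f s x) powr p)"
      using integrable_torus_1_iff[of "\<lambda>t. norm (f (tcons (Suc n) t s)) powr p"] elim(1)
      by (simp add: slice_def)
    moreover have "slice (Suc n) f s \<in> borel_measurable (torus 1)"
      by (rule borel_measurable_slice) (use elim in auto)
    ultimately show ?case by (simp add: Lp_space_def)
  qed
qed

lemma Lp_space_fhat:
  assumes "p \<ge> 1" and "Lp_space (torus (Suc n)) p f"
  shows "Lp_space (torus n) p (fhat (Suc n) f)"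
proof -
  interpret prob_space circle_measure by (rule prob_space_circle_measure)
  have f: "integrable (torus (Suc n)) f"
    using prob_space_torus assms by (intro Lp_space_imp_integrable) (auto simp: prob_space_def)
  have f_p: "integrable (torus (Suc n)) (\<lambda>x. norm (f x) powr p)"
    using assms(2) by (simp add: Lp_space_def)
  have [measurable]: "fhat (Suc n) f \<in> borel_measurable (torus n)"
    using integrable_partial_coeff[OF f] by (simp add: fhat_eq_partial_coeff)
  have "integrable (torus n) (\<lambda>s. norm (fhat (Suc n) f s) powr p)"
  proof (rule Bochner_Integration.integrable_bound)
    show "integrable (torus n) (\<lambda>s. \<integral>t. norm (f (tcons (Suc n) t s)) powr p \<partial>circle_measure)"
      by (rule integrable_fiber_integral[OF f_p])
    show "AE s in torus n. norm (norm (fhat (Suc n) f s) powr p) \<le>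
        norm (\<integral>t. norm (f (tcons (Suc n) t s)) powr p \<partial>circle_measure)"
      using AE_integrable_fiber[OF f] AE_integrable_fiber[OF f_p]
      by eventually_elim (simp add: fhat_def norm_integral_powr_le \<open>p \<ge> 1\<close>)
  qed simp
  then show ?thesis by (simp add: Lp_space_def)
qed

theorem proposition2p1:
  fixes N :: nat and p :: real and f :: "(nat \<Rightarrow> real) \<Rightarrow> complex"
  assumes "N \<ge> 2" and "p \<ge> 1" and "Lp_space (torus N) p f"
  shows "Hp N p f \<longleftrightarrow>
           ((AE s in torus (N - 1). Hp 1 p (slice N f s)) \<and> Hp (N - 1) p (fhat N f))"
proof -
  obtain n where N: "N = Suc n" using assms(1) by (cases N) auto
  have Lp: "Lp_space (torus (Suc n)) p f" using assms(3) by (simp add: N)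
  have "integrable (torus (Suc n)) f"
    using prob_space_torus Lp assms(2) by (intro Lp_space_imp_integrable) (auto simp: prob_space_def)
  then show ?thesis
    unfolding N Hp_def diff_Suc_1
    using analytic_class_Suc_iff AE_Lp_space_slice[OF Lp] Lp_space_fhat[OF assms(2) Lp] Lp
    by (simp add: eventually_conj_iff)
qed

end
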